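(* Consider the two-SP new-spectrum model described in the context, let $a=N_f\lambda_S^{1/\alpha-1}$ and $T=\frac{(B_1^o+B_2^o)a}{N_m}$. 1. If $B>T$, then $\mathrm{SW}_{\mathrm{w}}^{\mathrm{NE}}\le\mathrm{SW}_{\mathrm{w}}^{*}<\mathrm{SW}_{\mathrm{wo}}^{*}$, and $\mathrm{SW}_{\mathrm{w}}^{\mathrm{NE}}=\mathrm{SW}_{\mathrm{w}}^{*}$ if and only if, for both $i=1,2$, $$\lambda_S(R_S^0)^{-\alpha}-(R_M^0)^{-\alpha}-\frac{\alpha\lambda_S^2B_i^nR_0}{N_f}(R_S^0)^{-\alpha-1}+\frac{\alpha B_i^oR_0}{N_m}(R_M^0)^{-\alpha-1}\le0,$$ where $R_S^0=\frac{\lambda_S(B_1^n+B_2^n)R_0}{N_f}$ and $R_M^0=\frac{(B_1^o+B_2^o)R_0}{N_m}$. 2. If $B\le T$, then $\mathrm{SW}_{\mathrm{w}}^{\mathrm{NE}}\le\mathrm{SW}_{\mathrm{w}}^{*}=\mathrm{SW}_{\mathrm{wo}}^{*}$, and $\mathrm{SW}_{\mathrm{w}}^{\mathrm{NE}}=\mathrm{SW}_{\mathrm{w}}^{*}=\mathrm{SW}_{\mathrm{wo}}^{*}$ if and only if $$B_1^n\in\Big[B-\frac{B_2^oa}{N_m},\ \frac{B_1^oa}{N_m}\Big],\qquad B_2^n=B-B_1^n.$$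
   Context: Two service providers (SPs) $i=1,2$. SP $i$ has an initial licensed bandwidth $B_i^o>0$ and receives a share $B_i^n\ge0$ of newly available bandwidth $B>0$, with $B_1^n+B_2^n=B$. SP $i$'s total bandwidth is $B_i=B_i^o+B_i^n$, which it splits into macro-cell bandwidth $B_{i,M}\ge0$ and small-cell bandwidth $B_{i,S}$ with $B_{i,M}+B_{i,S}\le B_i$; the new bandwidth may only be used in small-cells, which is imposed as the regulatory constraint $B_{i,S}\ge B_{i,S}^0:=B_i^n$. Parameters: $R_0>0$, $\lambda_S>1$, a mass $N_m>0$ of mobile users (served only by macro-cells) and a mass $N_f>0$ of fixed users, each with utility $u(r)=r^{1-\alpha}/(1-\alpha)$, $\alpha\in(0,1)$. Second-stage prices are market-clearing: with $R_M=\frac{(B_{1,M}+B_{2,M})R_0}{N_m}$ and $R_S=\frac{\lambda_S(B_{1,S}+B_{2,S})R_0}{N_f}$, prices are $R_M^{-\alpha}$ (macro) and $R_S^{-\alpha}$ (small), mobile users receive rate $R_M$ and fixed users rate $R_S$. SP $i$'s payoff in the bandwidth game is $S_i=\lambda_SB_{i,S}R_0R_S^{-\alpha}+B_{i,M}R_0R_M^{-\alpha}$. Social welfare is $\mathrm{SW}=N_mu(R_M)+N_fu(R_S)$. For a given split $(B_1^n,B_2^n)$: $\mathrm{SW}_{\mathrm{wo}}^{*}$ is the maximal social welfare over all bandwidth allocations without the regulatory constraints (equal to the equilibrium social welfare of the unconstrained game); $\mathrm{SW}_{\mathrm{w}}^{*}$ is the maximal social welfare over all bandwidth allocations satisfying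 the regulatory constraints $B_{i,S}\ge B_i^n$; and $\mathrm{SW}_{\mathrm{w}}^{\mathrm{NE}}$ is the social welfare at the (unique) Nash equilibrium of the bandwidth game with the regulatory constraints. *)

theory Defs
  imports Complex_Main
begin

text \<open>A strategy of a service provider is a pair (macro-cell bandwidth, small-cell bandwidth).
  Model parameters: R0, lamS (\<lambda>_S), Nm, Nf, al (\<alpha>).\<close>

type_synonym strat = "real \<times> real"

definition feasible_wo :: "real \<Rightarrow> strat \<Rightarrow> bool" where
  "feasible_wo Bi s \<longleftrightarrow> fst s \<ge> 0 \<and> snd s \<ge> 0 \<and> fst s + snd s \<le> Bi"

definition feasible_w :: "real \<Rightarrow> real \<Rightarrow> strat \<Rightarrow> bool" where
  "feasible_w Bi Bin s \<longleftrightarrow> feasible_wo Bi s \<and> snd s \<ge> Bin"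

definition rateM :: "real \<Rightarrow> real \<Rightarrow> strat \<Rightarrow> strat \<Rightarrow> real" where
  "rateM R0 Nm s1 s2 = (fst s1 + fst s2) * R0 / Nm"

definition rateS :: "real \<Rightarrow> real \<Rightarrow> real \<Rightarrow> strat \<Rightarrow> strat \<Rightarrow> real" where
  "rateS R0 lamS Nf s1 s2 = lamS * (snd s1 + snd s2) * R0 / Nf"

text \<open>Payoff of the SP playing s against an opponent playing t
  (the model is symmetric in the two SPs).\<close>
definition payoff :: "real \<Rightarrow> real \<Rightarrow> real \<Rightarrow> real \<Rightarrow> real \<Rightarrow> strat \<Rightarrow> strat \<Rightarrow> real" where
  "payoff R0 lamS Nm Nf al s t =
     lamS * snd s * R0 * (rateS R0 lamS Nf s t) powr (- al)
     + fst s * R0 * (rateM R0 Nm s t) powr (- al)"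

definition util :: "real \<Rightarrow> real \<Rightarrow> real" where
  "util al r = r powr (1 - al) / (1 - al)"

definition SW :: "real \<Rightarrow> real \<Rightarrow> real \<Rightarrow> real \<Rightarrow> real \<Rightarrow> strat \<Rightarrow> strat \<Rightarrow> real" where
  "SW R0 lamS Nm Nf al s1 s2 =
     Nm * util al (rateM R0 Nm s1 s2) + Nf * util al (rateS R0 lamS Nf s1 s2)"

definition SW_opt_wo :: "real \<Rightarrow> real \<Rightarrow> real \<Rightarrow> real \<Rightarrow> real \<Rightarrow> real \<Rightarrow> real \<Rightarrow> real" where
  "SW_opt_wo R0 lamS Nm Nf al B1 B2 =
     Sup {SW R0 lamS Nm Nf al s1 s2 | s1 s2. feasible_wo B1 s1 \<and> feasible_wo B2 s2}"

definition SW_opt_w :: "real \<Rightarrow> real \<Rightarrow> real \<Rightarrow> real \<Rightarrow> real \<Rightarrow> real \<Rightarrow> real \<Rightarrow> real \<Rightarrow> real \<Rightarrow> real" where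
  "SW_opt_w R0 lamS Nm Nf al B1 B2 B1n B2n =
     Sup {SW R0 lamS Nm Nf al s1 s2 | s1 s2. feasible_w B1 B1n s1 \<and> feasible_w B2 B2n s2}"

definition is_NE_w :: "real \<Rightarrow> real \<Rightarrow> real \<Rightarrow> real \<Rightarrow> real \<Rightarrow> real \<Rightarrow> real \<Rightarrow> real \<Rightarrow> real
    \<Rightarrow> strat \<Rightarrow> strat \<Rightarrow> bool" where
  "is_NE_w R0 lamS Nm Nf al B1 B2 B1n B2n s1 s2 \<longleftrightarrow>
     feasible_w B1 B1n s1 \<and> feasible_w B2 B2n s2 \<and>
     (\<forall>s1'. feasible_w B1 B1n s1' \<longrightarrow>
        payoff R0 lamS Nm Nf al s1' s2 \<le> payoff R0 lamS Nm Nf al s1 s2) \<and>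
     (\<forall>s2'. feasible_w B2 B2n s2' \<longrightarrow>
        payoff R0 lamS Nm Nf al s2' s1 \<le> payoff R0 lamS Nm Nf al s2 s1)"

end

theory Submission
  imports Defs "HOL-Analysis.Convex" "HOL-Real_Asymp.Real_Asymp"
begin

text \<open>The social welfare depends only on the total macro- and small-cell bandwidths X and Y. It is
  concave, with partial derivatives R0 * mval_M X and R0 * mval_S Y, so on a line X + Y = Bt it is
  maximal exactly where these marginal values agree, i.e. where a * X = Nm * Y. The floor Y \<ge> Bn
  cuts this optimum off exactly when B > T, and then the floor itself is the constrained optimum.
  At an equilibrium both SPs use all their bandwidth and satisfy the first-order conditions for
  moving bandwidth between their two cells. Comparing each SP's shares of X and Y through these
  conditions shows that small cells never get too little bandwidth (mval_S Y \<le> mval_M X), that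
  the equilibrium is welfare-optimal iff each SP can afford its own floor at the optimal ratio, and,
  when B > T, that it sits at the floor iff neither SP gains from moving bandwidth into its small
  cell there.\<close>

lemma util_le_tangent:
  fixes al r r0 :: real
  assumes al: "0 < al" "al < 1" and r: "0 \<le> r" and r0: "0 < r0"
  shows "util al r \<le> util al r0 + r0 powr (-al) * (r - r0)"
proof -
  define p where "p = r0 powr (-al)"
  have p_pos: "0 < p" using r0 by (simp add: p_def)
  have r0_pow: "r0 powr (1 - al) = r0 * p"
    unfolding p_def using r0 powr_add[of r0 1 "-al"] by simp
  have "r powr (1 - al) \<le> ((1 - al) * r + al * r0) * p"
  proof (cases "r = 0")
    case False
    have "r powr (1 - al) = (r powr (1 - al) * r0 powr al) * p"
      unfolding p_def using r0 powr_add[of r0 al "-al"] by simp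
    also have "\<dots> \<le> ((1 - al) * r + al * r0) * p"
      using Youngs_inequality_0[of "1 - al" al r r0] al r r0 False p_pos
      by (intro mult_right_mono) simp_all
    finally show ?thesis .
  qed (use al r0 p_pos in simp)
  then have "r powr (1 - al) / (1 - al) \<le> ((1 - al) * r + al * r0) * p / (1 - al)"
    using al by (simp add: divide_right_mono)
  also have "\<dots> = r0 * p / (1 - al) + p * (r - r0)"
    using al by (simp add: field_simps)
  finally show ?thesis unfolding util_def r0_pow p_def .
qed

lemma has_real_derivative_pos_not_right_max:
  fixes f :: "real \<Rightarrow> real"
  assumes "(f has_real_derivative D) (at 0)" and "0 < D" and "0 < e"
    and "\<And>t. 0 < t \<Longrightarrow> t \<le> e \<Longrightarrow> f t \<le> f 0"
  shows False
proof -
  obtain d where "0 < d" and inc: "\<And>h. 0 < h \<Longrightarrow> h < d \<Longrightarrow> f 0 < f h"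
    using DERIV_pos_inc_right[OF assms(1,2)] by auto
  define h where "h = min (d / 2) e"
  have "0 < h" "h < d" "h \<le> e" using \<open>0 < d\<close> \<open>0 < e\<close> by (auto simp: h_def)
  then show False using inc assms(4) by fastforce
qed

lemma Sup_attained_eq:
  fixes f :: "'a \<Rightarrow> 'b \<Rightarrow> 'c :: conditionally_complete_linorder"
  assumes "P a b" "f a b = v" "\<And>a b. P a b \<Longrightarrow> f a b \<le> v"
  shows "Sup {f a b | a b. P a b} = v"
  by (rule cSup_eq_maximum) (use assms in blast)+

locale spectrum_model =
  fixes R0 lamS Nm Nf al :: real
  assumes R0_pos: "0 < R0" and lamS_gt1: "1 < lamS" and Nm_pos: "0 < Nm" and Nf_pos: "0 < Nf"
    and al_pos: "0 < al" and al_less1: "al < 1"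
begin

text \<open>For total macro- and small-cell bandwidths X and Y, R0 * mval_M X and R0 * mval_S Y are
  the partial derivatives of the social welfare, and also the revenue per unit of macro- resp.
  small-cell bandwidth at the market-clearing prices.\<close>

definition mval_S :: "real \<Rightarrow> real" where
  "mval_S Y = lamS * (lamS * Y * R0 / Nf) powr (-al)"

definition mval_M :: "real \<Rightarrow> real" where
  "mval_M X = (X * R0 / Nm) powr (-al)"

definition welfare :: "real \<Rightarrow> real \<Rightarrow> real" where
  "welfare X Y = Nm * util al (X * R0 / Nm) + Nf * util al (lamS * Y * R0 / Nf)"

lemma payoff_eq:
  "payoff R0 lamS Nm Nf al (m, x) (m', x') = R0 * (x * mval_S (x + x') + m * mval_M (m + m'))"
  unfolding payoff_def rateS_def rateM_def mval_S_def mval_M_def by (simp add: algebra_simps)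

lemma SW_eq_welfare:
  "SW R0 lamS Nm Nf al s1 s2 = welfare (fst s1 + fst s2) (snd s1 + snd s2)"
  unfolding SW_def welfare_def rateM_def rateS_def by simp

lemma mval_S_pos: "0 < Y \<Longrightarrow> 0 < mval_S Y"
  unfolding mval_S_def using lamS_gt1 R0_pos Nf_pos by simp

lemma mval_M_pos: "0 < X \<Longrightarrow> 0 < mval_M X"
  unfolding mval_M_def using R0_pos Nm_pos by simp

lemma mval_S_strict_antimono: "0 < Y \<Longrightarrow> Y < Y' \<Longrightarrow> mval_S Y' < mval_S Y"
  unfolding mval_S_def using lamS_gt1 R0_pos Nf_pos al_pos
  by (intro mult_strict_left_mono powr_less_mono2_neg) (simp_all add: divide_strict_right_mono)

lemma mval_M_strict_antimono: "0 < X \<Longrightarrow> X < X' \<Longrightarrow> mval_M X' < mval_M X"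
  unfolding mval_M_def using R0_pos Nm_pos al_pos
  by (intro powr_less_mono2_neg) (simp_all add: divide_strict_right_mono)

lemma mval_M_less_iff: "0 < X \<Longrightarrow> 0 < X' \<Longrightarrow> mval_M X < mval_M X' \<longleftrightarrow> X' < X"
  using mval_M_strict_antimono[of X X'] mval_M_strict_antimono[of X' X]
  by (cases X X' rule: linorder_cases) auto

text \<open>The constant a of the paper: welfare-optimal splits satisfy opt_ratio * X = Nm * Y.\<close>

definition opt_ratio :: real where
  "opt_ratio = Nf * lamS powr (1 / al - 1)"

lemma opt_ratio_pos: "0 < opt_ratio"
  unfolding opt_ratio_def using Nf_pos lamS_gt1 by simp

lemma mval_S_eq_mval_M_scaled:
  assumes "0 < Y"
  shows "mval_S Y = mval_M (Nm * Y / opt_ratio)"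
proof -
  define u where "u = Y * R0 / Nf"
  have u: "0 < u" unfolding u_def using assms R0_pos Nf_pos by simp
  have l: "0 < lamS" using lamS_gt1 by simp
  have "mval_M (Nm * Y / opt_ratio) = (u / lamS powr (1 / al - 1)) powr (- al)"
    unfolding mval_M_def opt_ratio_def u_def using Nm_pos by (simp add: field_simps)
  also have "\<dots> = u powr (- al) / lamS powr ((1 / al - 1) * (- al))"
    using u l by (simp add: powr_divide powr_powr)
  also have "(1 / al - 1) * (- al) = - (1 - al)"
    using al_pos by (simp add: field_simps)
  also have "u powr (- al) / lamS powr (- (1 - al)) = u powr (- al) * lamS powr (1 - al)"
    by (subst powr_minus) (simp add: divide_inverse)
  also have "\<dots> = lamS * (lamS * u) powr (- al)"
    using u l powr_add[of lamS 1 "- al"] by (simp add: powr_mult)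
  finally show ?thesis
    unfolding mval_S_def u_def by (simp add: mult.assoc)
qed

lemma mval_S_less_mval_M_iff:
  assumes "0 < X" "0 < Y"
  shows "mval_S Y < mval_M X \<longleftrightarrow> opt_ratio * X < Nm * Y"
  using mval_M_less_iff[of "Nm * Y / opt_ratio" X] assms Nm_pos opt_ratio_pos
  by (simp add: mval_S_eq_mval_M_scaled pos_less_divide_eq mult.commute)

lemma mval_S_eq_mval_M_iff:
  assumes "0 < X" "0 < Y"
  shows "mval_S Y = mval_M X \<longleftrightarrow> opt_ratio * X = Nm * Y"
  using mval_M_less_iff[of "Nm * Y / opt_ratio" X] mval_M_less_iff[of X "Nm * Y / opt_ratio"]
    assms Nm_pos opt_ratio_pos
  by (auto simp: mval_S_eq_mval_M_scaled eq_divide_eq pos_less_divide_eq pos_divide_less_eq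
      mult.commute)

lemma welfare_le_tangent:
  assumes "0 \<le> X" "0 \<le> Y" "0 < X0" "0 < Y0"
  shows "welfare X Y \<le> welfare X0 Y0 + R0 * (mval_M X0 * (X - X0) + mval_S Y0 * (Y - Y0))"
proof -
  have M: "util al (X * R0 / Nm) \<le> util al (X0 * R0 / Nm) + mval_M X0 * (X * R0 / Nm - X0 * R0 / Nm)"
    unfolding mval_M_def using assms R0_pos Nm_pos al_pos al_less1 by (intro util_le_tangent) simp_all
  have S: "util al (lamS * Y * R0 / Nf) \<le> util al (lamS * Y0 * R0 / Nf)
      + (lamS * Y0 * R0 / Nf) powr (-al) * (lamS * Y * R0 / Nf - lamS * Y0 * R0 / Nf)"
    using assms R0_pos Nf_pos lamS_gt1 al_pos al_less1 by (intro util_le_tangent) simp_all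
  have "welfare X Y \<le> Nm * (util al (X0 * R0 / Nm) + mval_M X0 * (X * R0 / Nm - X0 * R0 / Nm))
      + Nf * (util al (lamS * Y0 * R0 / Nf)
        + (lamS * Y0 * R0 / Nf) powr (-al) * (lamS * Y * R0 / Nf - lamS * Y0 * R0 / Nf))"
    unfolding welfare_def using M S Nm_pos Nf_pos by (intro add_mono mult_left_mono) simp_all
  also have "\<dots> = welfare X0 Y0 + R0 * (mval_M X0 * (X - X0) + mval_S Y0 * (Y - Y0))"
    unfolding welfare_def mval_S_def using Nm_pos Nf_pos by (simp add: field_simps)
  finally show ?thesis .
qed

lemma welfare_le_tangent_exchange:
  assumes "0 \<le> X" "0 \<le> Y" "0 < X0" "0 < Y0"
  shows "welfare X Y \<le> welfare X0 Y0
    + R0 * (mval_M X0 * ((X + Y) - (X0 + Y0)) + (Y - Y0) * (mval_S Y0 - mval_M X0))"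
  using welfare_le_tangent[OF assms] by (simp add: algebra_simps)

lemma welfare_le_balanced:
  assumes "0 \<le> X" "0 \<le> Y" "0 < X0" "0 < Y0" "X + Y \<le> X0 + Y0" "mval_S Y0 = mval_M X0"
  shows "welfare X Y \<le> welfare X0 Y0"
proof -
  have "mval_M X0 * ((X + Y) - (X0 + Y0)) \<le> 0"
    using assms mval_M_pos[of X0] by (simp add: mult_nonneg_nonpos)
  then show ?thesis
    using welfare_le_tangent_exchange[OF assms(1-4)] assms(6) R0_pos
    by (simp add: mult_nonneg_nonpos order_trans)
qed

lemma welfare_le_floor:
  assumes "0 \<le> X" "0 < X0" "0 < Y0" "Y0 \<le> Y" "X + Y \<le> X0 + Y0" "mval_S Y0 < mval_M X0"
  shows "welfare X Y \<le> welfare X0 Y0"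
proof -
  have "mval_M X0 * ((X + Y) - (X0 + Y0)) + (Y - Y0) * (mval_S Y0 - mval_M X0) \<le> 0"
    using assms mval_M_pos[of X0] by (intro add_nonpos_nonpos) (simp_all add: mult_nonneg_nonpos)
  then have "R0 * (mval_M X0 * ((X + Y) - (X0 + Y0)) + (Y - Y0) * (mval_S Y0 - mval_M X0)) \<le> 0"
    using R0_pos by (simp add: mult_nonneg_nonpos)
  then show ?thesis
    using welfare_le_tangent_exchange[of X Y X0 Y0] assms by simp
qed

lemma welfare_less_exchange:
  assumes "0 \<le> X" "0 \<le> Y" "0 < X0" "0 < Y0" "X + Y = X0 + Y0"
    and "(Y - Y0) * (mval_S Y0 - mval_M X0) < 0"
  shows "welfare X Y < welfare X0 Y0"
  using welfare_le_tangent_exchange[OF assms(1-4)] assms(5) mult_pos_neg[OF R0_pos assms(6)] by simp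

definition opt_M :: "real \<Rightarrow> real" where
  "opt_M Bt = Bt * Nm / (Nm + opt_ratio)"

definition opt_S :: "real \<Rightarrow> real" where
  "opt_S Bt = Bt * opt_ratio / (Nm + opt_ratio)"

lemma opt_M_pos: "0 < Bt \<Longrightarrow> 0 < opt_M Bt"
  unfolding opt_M_def using Nm_pos opt_ratio_pos by simp

lemma opt_S_pos: "0 < Bt \<Longrightarrow> 0 < opt_S Bt"
  unfolding opt_S_def using Nm_pos opt_ratio_pos by simp

lemma opt_M_plus_opt_S: "opt_M Bt + opt_S Bt = Bt"
  unfolding opt_M_def opt_S_def using Nm_pos opt_ratio_pos
  by (simp add: add_divide_distrib[symmetric] distrib_left[symmetric])

lemma opt_balanced: "0 < Bt \<Longrightarrow> mval_S (opt_S Bt) = mval_M (opt_M Bt)"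
  using mval_S_eq_mval_M_iff opt_M_pos opt_S_pos unfolding opt_M_def opt_S_def by simp

lemma opt_S_less_iff: "opt_S Bt < Z \<longleftrightarrow> opt_ratio * (Bt - Z) < Nm * Z"
  unfolding opt_S_def using Nm_pos opt_ratio_pos by (simp add: pos_divide_less_eq algebra_simps)

lemma balanced_eq_opt:
  assumes "0 < X" "0 < Y" "mval_S Y = mval_M X"
  shows "X = opt_M (X + Y)" "Y = opt_S (X + Y)"
proof -
  have "opt_ratio * X = Nm * Y" using mval_S_eq_mval_M_iff assms by simp
  then show "X = opt_M (X + Y)" "Y = opt_S (X + Y)"
    unfolding opt_M_def opt_S_def using Nm_pos opt_ratio_pos
    by (simp_all add: eq_divide_eq algebra_simps)
qed

lemma welfare_le_opt:
  assumes "0 < Bt" "0 \<le> X" "0 \<le> Y" "X + Y \<le> Bt"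
  shows "welfare X Y \<le> welfare (opt_M Bt) (opt_S Bt)"
  using assms opt_M_pos opt_S_pos opt_balanced opt_M_plus_opt_S
  by (intro welfare_le_balanced) simp_all

text \<open>The tangent at the optimum is flat along the line X + Y = Bt, so strictness needs the
  tangent at the midpoint of (X, Y) and the optimum.\<close>

lemma welfare_less_opt:
  assumes "0 < Bt" "0 \<le> X" "opt_S Bt < Y" "X + Y = Bt"
  shows "welfare X Y < welfare (opt_M Bt) (opt_S Bt)"
proof -
  define Ym where "Ym = (Y + opt_S Bt) / 2"
  define Xm where "Xm = Bt - Ym"
  have Ym: "opt_S Bt < Ym" "Ym < Y" "0 < Ym"
    using assms opt_S_pos[OF \<open>0 < Bt\<close>] by (auto simp: Ym_def)
  have Xm: "0 < Xm" using Ym assms unfolding Xm_def by simp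
  have "opt_ratio * Xm < Nm * Ym" using Ym(1) opt_S_less_iff unfolding Xm_def by simp
  then have "mval_S Ym < mval_M Xm" using mval_S_less_mval_M_iff Xm Ym by simp
  then have "welfare X Y < welfare Xm Ym"
    using Ym Xm assms by (intro welfare_less_exchange) (simp_all add: Xm_def mult_pos_neg)
  also have "\<dots> \<le> welfare (opt_M Bt) (opt_S Bt)"
    using Xm Ym by (intro welfare_le_opt) (simp_all add: Xm_def)
  finally show ?thesis .
qed

text \<open>R0 * shift_gain x m Y X is the marginal payoff of an SP with macro-cell bandwidth m and
  small-cell bandwidth x from moving bandwidth from its macro- to its small-cell.\<close>

definition shift_gain :: "real \<Rightarrow> real \<Rightarrow> real \<Rightarrow> real \<Rightarrow> real" where
  "shift_gain x m Y X = mval_S Y * (1 - al * x / Y) - mval_M X * (1 - al * m / X)"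

lemma shift_gain_eq:
  assumes "0 < X" "0 < Y" and RS: "RS = lamS * Y * R0 / Nf" and RM: "RM = X * R0 / Nm"
  shows "lamS * RS powr (- al) - RM powr (- al) - al * lamS\<^sup>2 * x * R0 / Nf * RS powr (- al - 1)
      + al * m * R0 / Nm * RM powr (- al - 1) = shift_gain x m Y X"
proof -
  have "0 < RS" "0 < RM" using assms lamS_gt1 R0_pos Nf_pos Nm_pos by simp_all
  then have pow: "RS powr (- al - 1) = RS powr (- al) / RS" "RM powr (- al - 1) = RM powr (- al) / RM"
    by (simp_all add: powr_diff)
  have S: "lamS * R0 / Nf / RS = 1 / Y" and M: "R0 / Nm / RM = 1 / X"
    using assms lamS_gt1 R0_pos Nf_pos Nm_pos by simp_all
  have "al * lamS\<^sup>2 * x * R0 / Nf * (RS powr (- al) / RS) = al * x * (lamS * RS powr (- al)) * (lamS * R0 / Nf / RS)"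
    "al * m * R0 / Nm * (RM powr (- al) / RM) = al * m * RM powr (- al) * (R0 / Nm / RM)"
    by (simp_all add: power2_eq_square)
  then show ?thesis
    unfolding shift_gain_def mval_S_def mval_M_def RS[symmetric] RM[symmetric] pow S M
    by (simp add: algebra_simps)
qed

lemma has_real_derivative_mval_S:
  assumes "0 < Y"
  shows "(mval_S has_real_derivative - al * mval_S Y / Y) (at Y)"
proof -
  have "0 < lamS * Y * R0 / Nf" using assms lamS_gt1 R0_pos Nf_pos by simp
  then have "(mval_S has_real_derivative
      lamS * (-al * (lamS * Y * R0 / Nf) powr (-al - 1) * (lamS * R0 / Nf))) (at Y)"
    unfolding mval_S_def[abs_def] by (auto intro!: derivative_eq_intros)
  then show ?thesis
    using assms Nf_pos R0_pos lamS_gt1 unfolding mval_S_def by (simp add: powr_diff field_simps)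
qed

lemma has_real_derivative_mval_M:
  assumes "0 < X"
  shows "(mval_M has_real_derivative - al * mval_M X / X) (at X)"
proof -
  have "0 < X * R0 / Nm" using assms R0_pos Nm_pos by simp
  then have "(mval_M has_real_derivative
      -al * (X * R0 / Nm) powr (-al - 1) * (R0 / Nm)) (at X)"
    unfolding mval_M_def[abs_def] by (auto intro!: derivative_eq_intros)
  then show ?thesis
    using assms Nm_pos R0_pos unfolding mval_M_def by (simp add: powr_diff field_simps)
qed

lemma has_real_derivative_payoff_shift:
  assumes "0 < m + m'" "0 < x + x'"
  shows "((\<lambda>t. payoff R0 lamS Nm Nf al (m - c * t, x + c * t) (m', x')) has_real_derivative
      c * R0 * shift_gain x m (x + x') (m + m')) (at 0)"
proof -
  have "((\<lambda>t. R0 * ((x + c * t) * mval_S (x + x' + c * t) + (m - c * t) * mval_M (m + m' - c * t)))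
      has_real_derivative R0 * ((c * mval_S (x + x') + x * (- al * mval_S (x + x') / (x + x') * c))
        + (- c * mval_M (m + m') + m * (- al * mval_M (m + m') / (m + m') * - c)))) (at 0)"
    by (auto intro!: derivative_eq_intros
        DERIV_chain2[OF has_real_derivative_mval_S] DERIV_chain2[OF has_real_derivative_mval_M]
        simp: assms mult_ac)
  moreover have "R0 * ((c * mval_S (x + x') + x * (- al * mval_S (x + x') / (x + x') * c))
        + (- c * mval_M (m + m') + m * (- al * mval_M (m + m') / (m + m') * - c)))
      = c * R0 * shift_gain x m (x + x') (m + m')"
    unfolding shift_gain_def by (simp add: algebra_simps)
  ultimately show ?thesis
    unfolding payoff_eq by (simp add: algebra_simps)
qed

lemma has_real_derivative_payoff_small:
  assumes "0 < x + x'"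
  shows "((\<lambda>t. payoff R0 lamS Nm Nf al (m, x + t) (m', x')) has_real_derivative
      R0 * mval_S (x + x') * (1 - al * x / (x + x'))) (at 0)"
proof -
  have "((\<lambda>t. R0 * ((x + t) * mval_S (x + x' + t) + m * mval_M (m + m')))
      has_real_derivative R0 * (mval_S (x + x') + x * (- al * mval_S (x + x') / (x + x')))) (at 0)"
    by (auto intro!: derivative_eq_intros DERIV_chain2[OF has_real_derivative_mval_S] simp: assms)
  then show ?thesis
    unfolding payoff_eq by (simp add: algebra_simps)
qed

lemma one_minus_al_share_pos:
  assumes "0 < X" "m \<le> X"
  shows "0 < 1 - al * m / X"
proof -
  have "al * (m / X) \<le> al * 1"
    using assms al_pos by (intro mult_left_mono) simp_all
  then show ?thesis using al_less1 by simp
qed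

lemma shift_gain_pos:
  assumes "0 < X" "0 < Y" "m \<le> X" "mval_M X \<le> mval_S Y" "x * X \<le> m * Y"
    and "mval_M X < mval_S Y \<or> x * X < m * Y"
  shows "0 < shift_gain x m Y X"
proof -
  have share: "x / Y \<le> m / X" "x * X < m * Y \<Longrightarrow> x / Y < m / X"
    using assms(1,2,5) by (simp_all add: divide_simps mult.commute)
  have pos: "0 < mval_S Y" "0 < 1 - al * m / X"
    using mval_S_pos one_minus_al_share_pos assms by simp_all
  have "0 < mval_S Y * (al * (m / X - x / Y)) + (mval_S Y - mval_M X) * (1 - al * m / X)"
    using assms(6)
  proof
    assume "mval_M X < mval_S Y"
    then show ?thesis
      using share pos assms(4) al_pos by (intro add_nonneg_pos mult_nonneg_nonneg mult_pos_pos) simp_all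
  next
    assume "x * X < m * Y"
    then show ?thesis
      using share pos assms(4) al_pos by (intro add_pos_nonneg mult_nonneg_nonneg mult_pos_pos) simp_all
  qed
  then show ?thesis
    unfolding shift_gain_def by (simp add: algebra_simps)
qed

lemma shift_gain_neg:
  assumes "0 < X" "0 < Y" "x \<le> Y" "mval_S Y \<le> mval_M X" "m * Y \<le> x * X"
    and "mval_S Y < mval_M X \<or> m * Y < x * X"
  shows "shift_gain x m Y X < 0"
proof -
  have share: "m / X \<le> x / Y" "m * Y < x * X \<Longrightarrow> m / X < x / Y"
    using assms(1,2,5) by (simp_all add: divide_simps mult.commute)
  have pos: "0 < mval_M X" "0 < 1 - al * x / Y"
    using mval_M_pos one_minus_al_share_pos assms by simp_all
  have "0 < mval_M X * (al * (x / Y - m / X)) + (mval_M X - mval_S Y) * (1 - al * x / Y)"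
    using assms(6)
  proof
    assume "mval_S Y < mval_M X"
    then show ?thesis
      using share pos assms(4) al_pos by (intro add_nonneg_pos mult_nonneg_nonneg mult_pos_pos) simp_all
  next
    assume "m * Y < x * X"
    then show ?thesis
      using share pos assms(4) al_pos by (intro add_pos_nonneg mult_nonneg_nonneg mult_pos_pos) simp_all
  qed
  then show ?thesis
    unfolding shift_gain_def by (simp add: algebra_simps)
qed

lemma shift_gain_less:
  assumes "0 < Y0" "Y0 < Y" "0 < X" "X < X0" "xn \<le> Y0" "mo \<le> X0"
    and "xn * Y \<le> x * Y0" "m * X0 \<le> mo * X"
  shows "shift_gain x m Y X < shift_gain xn mo Y0 X0"
proof -
  have "xn / Y0 \<le> x / Y" "m / X \<le> mo / X0"
    using assms by (simp_all add: divide_simps mult.commute)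
  then have S: "1 - al * x / Y \<le> 1 - al * xn / Y0" and M: "1 - al * mo / X0 \<le> 1 - al * m / X"
    using al_pos by (simp_all add: mult_left_mono flip: times_divide_eq_right)
  have "mval_S Y * (1 - al * x / Y) \<le> mval_S Y * (1 - al * xn / Y0)"
    using S mval_S_pos[of Y] assms by (intro mult_left_mono) simp_all
  also have "\<dots> < mval_S Y0 * (1 - al * xn / Y0)"
    using mval_S_strict_antimono one_minus_al_share_pos assms by simp
  finally have "mval_S Y * (1 - al * x / Y) < mval_S Y0 * (1 - al * xn / Y0)" .
  moreover have "mval_M X0 * (1 - al * mo / X0) < mval_M X * (1 - al * mo / X0)"
    using mval_M_strict_antimono one_minus_al_share_pos assms by simp
  moreover have "\<dots> \<le> mval_M X * (1 - al * m / X)"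
    using M mval_M_pos[of X] assms by (intro mult_left_mono) simp_all
  ultimately show ?thesis
    unfolding shift_gain_def by simp
qed

definition best_response :: "real \<Rightarrow> real \<Rightarrow> strat \<Rightarrow> strat \<Rightarrow> bool" where
  "best_response Bi Bin s t \<longleftrightarrow> feasible_w Bi Bin s \<and>
     (\<forall>s'. feasible_w Bi Bin s' \<longrightarrow> payoff R0 lamS Nm Nf al s' t \<le> payoff R0 lamS Nm Nf al s t)"

lemma is_NE_w_iff_best_responses:
  "is_NE_w R0 lamS Nm Nf al B1 B2 B1n B2n s1 s2 \<longleftrightarrow>
     best_response B1 B1n s1 s2 \<and> best_response B2 B2n s2 s1"
  unfolding is_NE_w_def best_response_def by auto

lemma best_response_uses_all:
  assumes br: "best_response Bi Bin (m, x) (m', x')" and "0 \<le> x'" "0 < x + x'"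
  shows "m + x = Bi"
proof (rule ccontr)
  assume "m + x \<noteq> Bi"
  with br have gap: "0 < Bi - (m + x)" and "0 \<le> m" "0 \<le> x" "Bin \<le> x"
    unfolding best_response_def feasible_w_def feasible_wo_def by auto
  have "x / (x + x') \<le> 1" using assms(2,3) by simp
  then have "al * x / (x + x') < 1"
    using al_pos al_less1 mult_left_le[of "x / (x + x')" al] by simp
  then have "0 < R0 * mval_S (x + x') * (1 - al * x / (x + x'))"
    using R0_pos mval_S_pos assms(3) by simp
  moreover have "payoff R0 lamS Nm Nf al (m, x + t) (m', x') \<le> payoff R0 lamS Nm Nf al (m, x + 0) (m', x')"
    if "0 < t" "t \<le> Bi - (m + x)" for t
    using br that \<open>0 \<le> m\<close> \<open>Bin \<le> x\<close>
    unfolding best_response_def feasible_w_def feasible_wo_def by auto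
  ultimately show False
    using has_real_derivative_pos_not_right_max[OF has_real_derivative_payoff_small[OF assms(3)] _ gap]
    by blast
qed

lemma best_response_shift_gain_nonpos:
  assumes br: "best_response Bi Bin (m, x) (m', x')"
    and "0 < m" "0 < m + m'" "0 < x + x'"
  shows "shift_gain x m (x + x') (m + m') \<le> 0"
proof (rule ccontr)
  assume "\<not> ?thesis"
  then have "0 < 1 * R0 * shift_gain x m (x + x') (m + m')" using R0_pos by simp
  moreover have "payoff R0 lamS Nm Nf al (m - 1 * t, x + 1 * t) (m', x')
      \<le> payoff R0 lamS Nm Nf al (m - 1 * 0, x + 1 * 0) (m', x')" if "0 < t" "t \<le> m" for t
    using br that unfolding best_response_def feasible_w_def feasible_wo_def by auto
  ultimately show False
    using has_real_derivative_pos_not_right_max[OF has_real_derivative_payoff_shift[OF assms(3,4)]]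
      \<open>0 < m\<close> by blast
qed

lemma best_response_shift_gain_nonneg:
  assumes br: "best_response Bi Bin (m, x) (m', x')"
    and "0 \<le> Bin" "Bin < x" "0 < m + m'" "0 < x + x'"
  shows "0 \<le> shift_gain x m (x + x') (m + m')"
proof (rule ccontr)
  assume "\<not> ?thesis"
  then have "0 < - 1 * R0 * shift_gain x m (x + x') (m + m')" using R0_pos by (simp add: mult_pos_neg)
  moreover have "payoff R0 lamS Nm Nf al (m - - 1 * t, x + - 1 * t) (m', x')
      \<le> payoff R0 lamS Nm Nf al (m - - 1 * 0, x + - 1 * 0) (m', x')" if "0 < t" "t \<le> x - Bin" for t
    using br that \<open>0 \<le> Bin\<close> unfolding best_response_def feasible_w_def feasible_wo_def by auto
  ultimately show False
    using has_real_derivative_pos_not_right_max[OF has_real_derivative_payoff_shift[OF assms(4,5)]]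
      \<open>Bin < x\<close> by (metis diff_gt_0_iff_gt)
qed

text \<open>With no macro-cell bandwidth at all, the macro-cell price is unbounded, so moving a little
  bandwidth into the macro-cell pays off.\<close>

lemma not_best_response_all_small:
  assumes br: "best_response Bi Bin (0, Bi) (0, x')" and "0 \<le> Bin" "Bin < Bi" "0 \<le> x'"
  shows False
proof -
  have "filterlim mval_M at_top (at_right 0)"
    unfolding mval_M_def[abs_def] using R0_pos Nm_pos al_pos by real_asymp
  then have "eventually (\<lambda>h. mval_S (Bi + x') < mval_M h) (at_right 0)"
    by (simp add: filterlim_at_top_dense)
  then obtain b where "0 < b" and b: "\<And>h. 0 < h \<Longrightarrow> h < b \<Longrightarrow> mval_S (Bi + x') < mval_M h"
    unfolding eventually_at_right[OF zero_less_one] by auto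
  define h where "h = min b (Bi - Bin) / 2"
  have h: "0 < h" "h < b" "h < Bi - Bin"
    using \<open>0 < b\<close> assms(3) by (auto simp: h_def)
  have "mval_S (Bi + x') \<le> mval_S (Bi - h + x')"
    using mval_S_strict_antimono[of "Bi - h + x'" "Bi + x'"] h assms by fastforce
  then have "(Bi - h) * mval_S (Bi + x') \<le> (Bi - h) * mval_S (Bi - h + x')"
    using h assms by (intro mult_left_mono) simp_all
  moreover have "h * mval_S (Bi + x') < h * mval_M h"
    using b h by (intro mult_strict_left_mono) simp_all
  ultimately have "Bi * mval_S (Bi + x') < (Bi - h) * mval_S (Bi - h + x') + h * mval_M h"
    by (simp add: algebra_simps)
  then have "payoff R0 lamS Nm Nf al (0, Bi) (0, x') < payoff R0 lamS Nm Nf al (h, Bi - h) (0, x')"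
    unfolding payoff_eq using R0_pos by simp
  moreover have "feasible_w Bi Bin (h, Bi - h)"
    unfolding feasible_w_def feasible_wo_def using h assms(2) by simp
  ultimately show False using br unfolding best_response_def by fastforce
qed

end

locale sp_response = spectrum_model +
  fixes Bo Bn m x m' x' X Y :: real
  assumes Bo_pos: "0 < Bo" and Bn_nonneg: "0 \<le> Bn"
    and opponent_nonneg: "0 \<le> m'" "0 \<le> x'"
    and X_eq: "X = m + m'" and Y_eq: "Y = x + x'" and Y_pos: "0 < Y"
    and best: "best_response (Bo + Bn) Bn (m, x) (m', x')"
begin

lemma feasible: "0 \<le> m" "Bn \<le> x"
  using best unfolding best_response_def feasible_w_def feasible_wo_def by auto

lemma uses_all: "m + x = Bo + Bn"
  using best_response_uses_all[OF best] opponent_nonneg Y_pos Y_eq by simp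

lemma X_pos: "0 < X"
proof (rule ccontr)
  assume "\<not> 0 < X"
  then have "m = 0" "m' = 0" using feasible opponent_nonneg X_eq by auto
  then show False
    using not_best_response_all_small[of "Bo + Bn" Bn x'] best uses_all Bo_pos Bn_nonneg
      opponent_nonneg by simp
qed

lemma shares_le: "0 \<le> x" "x \<le> Y" "m \<le> X"
  using feasible opponent_nonneg Bn_nonneg X_eq Y_eq by simp_all

lemma shift_gain_nonpos: "0 < m \<Longrightarrow> shift_gain x m Y X \<le> 0"
  using best_response_shift_gain_nonpos[OF best] X_pos Y_pos X_eq Y_eq by simp

lemma shift_gain_nonneg: "Bn < x \<Longrightarrow> 0 \<le> shift_gain x m Y X"
  using best_response_shift_gain_nonneg[OF best] Bn_nonneg X_pos Y_pos X_eq Y_eq by simp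

lemma macro_share_less:
  assumes "mval_M X < mval_S Y"
  shows "m * Y < x * X"
proof (cases "m = 0")
  case True
  then show ?thesis using uses_all Bo_pos Bn_nonneg X_pos by simp
next
  case False
  then show ?thesis
    using shift_gain_pos[of X Y m x] shift_gain_nonpos assms X_pos Y_pos shares_le feasible by force
qed

lemma small_share_less_above_floor:
  "mval_S Y < mval_M X \<Longrightarrow> Bn < x \<Longrightarrow> x * X < m * Y"
  using shift_gain_neg[of X Y x m] shift_gain_nonneg X_pos Y_pos shares_le by force

lemma macro_share_le_balanced: "mval_S Y = mval_M X \<Longrightarrow> m * Y \<le> x * X"
  using shift_gain_pos[of X Y m x] shift_gain_nonpos X_pos Y_pos shares_le feasible
  by (cases "m = 0") force+

lemma small_share_less:
  assumes "mval_S Y < mval_M X" "Bn * Nm \<le> Bo * opt_ratio"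
  shows "x * X < m * Y"
proof (cases "Bn < x")
  case False
  then have "x = Bn" "m = Bo" using feasible uses_all by simp_all
  have "opt_ratio * X < Nm * Y" using mval_S_less_mval_M_iff X_pos Y_pos assms(1) by simp
  then have "Bo * (opt_ratio * X) < Bo * (Nm * Y)" using Bo_pos by simp
  moreover have "Bn * Nm * X \<le> Bo * opt_ratio * X" using assms(2) X_pos by simp
  ultimately have "Nm * (Bn * X) < Nm * (Bo * Y)" by (simp add: ac_simps)
  then show ?thesis using \<open>x = Bn\<close> \<open>m = Bo\<close> Nm_pos by simp
qed (use small_share_less_above_floor assms in simp)

lemma floor_affordable:
  assumes "mval_S Y = mval_M X" "x * X \<le> m * Y"
  shows "Bn * Nm \<le> Bo * opt_ratio"
proof -
  have "opt_ratio * X = Nm * Y" using mval_S_eq_mval_M_iff X_pos Y_pos assms(1) by simp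
  have "X * (x * Nm) = Nm * (x * X)" by simp
  also have "\<dots> \<le> Nm * (m * Y)" using assms(2) Nm_pos by simp
  also have "\<dots> = X * (m * opt_ratio)" using \<open>opt_ratio * X = Nm * Y\<close> by (simp add: algebra_simps)
  finally have "x * Nm \<le> m * opt_ratio" using X_pos by simp
  moreover have "Bn * Nm \<le> x * Nm" "m * opt_ratio \<le> Bo * opt_ratio"
    using feasible uses_all Nm_pos opt_ratio_pos by simp_all
  ultimately show ?thesis by linarith
qed

lemma floor_shift_gain_pos:
  assumes "Bn < x" "x' = Bn'" "m' = Bo'" "0 < Bn + Bn'"
  shows "0 < shift_gain Bn Bo (Bn + Bn') (Bo + Bo')"
proof -
  have "Bn * Bn' \<le> x * Bn'" "m * Bo' \<le> Bo * Bo'"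
    using assms feasible uses_all opponent_nonneg by (simp_all add: mult_right_mono)
  then have "Bn * Y \<le> x * (Bn + Bn')" "m * (Bo + Bo') \<le> Bo * X"
    using assms X_eq Y_eq by (simp_all add: algebra_simps)
  then have "shift_gain x m Y X < shift_gain Bn Bo (Bn + Bn') (Bo + Bo')"
    using assms X_pos Bn_nonneg opponent_nonneg feasible uses_all X_eq Y_eq
    by (intro shift_gain_less) simp_all
  then show ?thesis using shift_gain_nonneg assms(1) by simp
qed

end

locale spectrum_market = spectrum_model +
  fixes B1o B2o B1n B2n :: real
  assumes B1o_pos: "0 < B1o" and B2o_pos: "0 < B2o"
    and B1n_nonneg: "0 \<le> B1n" and B2n_nonneg: "0 \<le> B2n" and Bn_pos: "0 < B1n + B2n"
begin

abbreviation Bo :: real where "Bo \<equiv> B1o + B2o"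
abbreviation Bn :: real where "Bn \<equiv> B1n + B2n"

lemma Bo_pos: "0 < Bo"
  using B1o_pos B2o_pos by simp

lemma SW_opt_wo_eq:
  "SW_opt_wo R0 lamS Nm Nf al (B1o + B1n) (B2o + B2n) = welfare (opt_M (Bo + Bn)) (opt_S (Bo + Bn))"
  unfolding SW_opt_wo_def
proof (rule Sup_attained_eq)
  have "opt_M (Bo + Bn) = opt_M (B1o + B1n) + opt_M (B2o + B2n)"
    "opt_S (Bo + Bn) = opt_S (B1o + B1n) + opt_S (B2o + B2n)"
    unfolding opt_M_def opt_S_def by (simp_all add: algebra_simps add_divide_distrib)
  then show "SW R0 lamS Nm Nf al (opt_M (B1o + B1n), opt_S (B1o + B1n)) (opt_M (B2o + B2n), opt_S (B2o + B2n))
      = welfare (opt_M (Bo + Bn)) (opt_S (Bo + Bn))"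
    unfolding SW_eq_welfare by simp
  show "feasible_wo (B1o + B1n) (opt_M (B1o + B1n), opt_S (B1o + B1n))
      \<and> feasible_wo (B2o + B2n) (opt_M (B2o + B2n), opt_S (B2o + B2n))"
    unfolding feasible_wo_def using opt_M_pos opt_S_pos opt_M_plus_opt_S B1o_pos B2o_pos
      B1n_nonneg B2n_nonneg by (simp add: less_imp_le)
qed (use Bo_pos Bn_pos in \<open>auto simp: SW_eq_welfare feasible_wo_def intro!: welfare_le_opt\<close>)

lemma SW_opt_w_eq_opt:
  assumes "Nm * Bn \<le> opt_ratio * Bo"
  shows "SW_opt_w R0 lamS Nm Nf al (B1o + B1n) (B2o + B2n) B1n B2n
    = welfare (opt_M (Bo + Bn)) (opt_S (Bo + Bn))"
  unfolding SW_opt_w_def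
proof (rule Sup_attained_eq)
  define d where "d = (opt_S (Bo + Bn) - Bn) / Bo"
  have "Bn \<le> opt_S (Bo + Bn)" "opt_S (Bo + Bn) \<le> Bo + Bn"
    using assms opt_S_less_iff[of "Bo + Bn" Bn] opt_M_pos[of "Bo + Bn"] opt_M_plus_opt_S[of "Bo + Bn"]
      Bo_pos Bn_pos by (simp_all add: not_less[symmetric])
  then have d: "0 \<le> d" "d \<le> 1" unfolding d_def using Bo_pos by simp_all
  have "d * Bo = opt_S (Bo + Bn) - Bn" unfolding d_def using Bo_pos by simp
  then have "B1o * (1 - d) + B2o * (1 - d) = opt_M (Bo + Bn)"
    "B1n + d * B1o + (B2n + d * B2o) = opt_S (Bo + Bn)"
    using opt_M_plus_opt_S[of "Bo + Bn"] by (simp_all add: algebra_simps)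
  then show "SW R0 lamS Nm Nf al (B1o * (1 - d), B1n + d * B1o) (B2o * (1 - d), B2n + d * B2o)
      = welfare (opt_M (Bo + Bn)) (opt_S (Bo + Bn))"
    unfolding SW_eq_welfare by simp
  show "feasible_w (B1o + B1n) B1n (B1o * (1 - d), B1n + d * B1o)
      \<and> feasible_w (B2o + B2n) B2n (B2o * (1 - d), B2n + d * B2o)"
    unfolding feasible_w_def feasible_wo_def using d B1o_pos B2o_pos B1n_nonneg B2n_nonneg
    by (simp add: algebra_simps)
qed (use Bo_pos Bn_pos in \<open>auto simp: SW_eq_welfare feasible_w_def feasible_wo_def intro!: welfare_le_opt\<close>)

lemma floor_undervalued: "opt_ratio * Bo < Nm * Bn \<Longrightarrow> mval_S Bn < mval_M Bo"
  using mval_S_less_mval_M_iff Bo_pos Bn_pos by simp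

lemma SW_opt_w_eq_floor:
  assumes "opt_ratio * Bo < Nm * Bn"
  shows "SW_opt_w R0 lamS Nm Nf al (B1o + B1n) (B2o + B2n) B1n B2n = welfare Bo Bn"
  unfolding SW_opt_w_def
proof (rule Sup_attained_eq)
  show "feasible_w (B1o + B1n) B1n (B1o, B1n) \<and> feasible_w (B2o + B2n) B2n (B2o, B2n)"
    unfolding feasible_w_def feasible_wo_def using B1o_pos B2o_pos B1n_nonneg B2n_nonneg by simp
qed (use Bo_pos Bn_pos floor_undervalued[OF assms] in
    \<open>auto simp: SW_eq_welfare feasible_w_def feasible_wo_def intro!: welfare_le_floor\<close>)

lemma floor_less_opt:
  assumes "opt_ratio * Bo < Nm * Bn"
  shows "welfare Bo Bn < welfare (opt_M (Bo + Bn)) (opt_S (Bo + Bn))"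
  using assms Bo_pos Bn_pos opt_S_less_iff[of "Bo + Bn" Bn] by (intro welfare_less_opt) simp_all

end

locale equilibrium = spectrum_market +
  fixes m1 x1 m2 x2 :: real
  assumes NE: "is_NE_w R0 lamS Nm Nf al (B1o + B1n) (B2o + B2n) B1n B2n (m1, x1) (m2, x2)"
begin

abbreviation X :: real where "X \<equiv> m1 + m2"
abbreviation Y :: real where "Y \<equiv> x1 + x2"

lemma best_responses:
  "best_response (B1o + B1n) B1n (m1, x1) (m2, x2)" "best_response (B2o + B2n) B2n (m2, x2) (m1, x1)"
  using NE is_NE_w_iff_best_responses by auto

lemma feasible_strategies: "0 \<le> m1" "0 \<le> m2" "B1n \<le> x1" "B2n \<le> x2"
  using best_responses unfolding best_response_def feasible_w_def feasible_wo_def by auto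

lemma Bn_le_Y: "Bn \<le> Y"
  using feasible_strategies by simp

sublocale sp1: sp_response R0 lamS Nm Nf al B1o B1n m1 x1 m2 x2 X Y
  using best_responses feasible_strategies Bn_le_Y Bn_pos B1o_pos B1n_nonneg B2n_nonneg
  by unfold_locales auto

sublocale sp2: sp_response R0 lamS Nm Nf al B2o B2n m2 x2 m1 x1 X Y
  using best_responses feasible_strategies Bn_le_Y Bn_pos B2o_pos B1n_nonneg B2n_nonneg
  by unfold_locales auto

lemma NE_total: "X + Y = Bo + Bn"
  using sp1.uses_all sp2.uses_all by simp

lemma NE_SW_eq: "SW R0 lamS Nm Nf al (m1, x1) (m2, x2) = welfare X Y"
  by (simp add: SW_eq_welfare)

lemma shares_sum: "m1 * Y + m2 * Y = x1 * X + x2 * X"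
  by (simp add: algebra_simps)

lemma NE_mval_S_le_mval_M: "mval_S Y \<le> mval_M X"
  using sp1.macro_share_less sp2.macro_share_less shares_sum by fastforce

lemma NE_welfare_le_opt: "welfare X Y \<le> welfare (opt_M (Bo + Bn)) (opt_S (Bo + Bn))"
  using NE_total sp1.X_pos sp1.Y_pos Bo_pos Bn_pos by (intro welfare_le_opt) simp_all

lemma NE_welfare_eq_opt_iff:
  "welfare X Y = welfare (opt_M (Bo + Bn)) (opt_S (Bo + Bn)) \<longleftrightarrow> mval_S Y = mval_M X"
proof
  assume "mval_S Y = mval_M X"
  then show "welfare X Y = welfare (opt_M (Bo + Bn)) (opt_S (Bo + Bn))"
    using balanced_eq_opt[OF sp1.X_pos sp1.Y_pos] NE_total by simp
next
  assume eq: "welfare X Y = welfare (opt_M (Bo + Bn)) (opt_S (Bo + Bn))"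
  show "mval_S Y = mval_M X"
  proof (rule ccontr)
    assume "mval_S Y \<noteq> mval_M X"
    then have "mval_S Y < mval_M X" using NE_mval_S_le_mval_M by simp
    then have "opt_ratio * X < Nm * Y"
      using mval_S_less_mval_M_iff sp1.X_pos sp1.Y_pos by simp
    then have "opt_ratio * (Bo + Bn - Y) < Nm * Y" by (simp add: NE_total[symmetric])
    then have "opt_S (Bo + Bn) < Y" using opt_S_less_iff by simp
    then show False
      using welfare_less_opt[of "Bo + Bn" X Y] eq NE_total sp1.X_pos Bo_pos Bn_pos by simp
  qed
qed

lemma balanced_iff_floors_affordable:
  "mval_S Y = mval_M X \<longleftrightarrow> B1n * Nm \<le> B1o * opt_ratio \<and> B2n * Nm \<le> B2o * opt_ratio"
proof
  assume bal: "mval_S Y = mval_M X"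
  then have "x1 * X \<le> m1 * Y" "x2 * X \<le> m2 * Y"
    using sp1.macro_share_le_balanced sp2.macro_share_le_balanced shares_sum by simp_all
  then show "B1n * Nm \<le> B1o * opt_ratio \<and> B2n * Nm \<le> B2o * opt_ratio"
    using sp1.floor_affordable sp2.floor_affordable bal by simp
next
  assume affordable: "B1n * Nm \<le> B1o * opt_ratio \<and> B2n * Nm \<le> B2o * opt_ratio"
  show "mval_S Y = mval_M X"
  proof (rule ccontr)
    assume "mval_S Y \<noteq> mval_M X"
    then have "mval_S Y < mval_M X" using NE_mval_S_le_mval_M by simp
    then have "x1 * X < m1 * Y" "x2 * X < m2 * Y"
      using sp1.small_share_less sp2.small_share_less affordable by simp_all
    then show False using shares_sum by simp
  qed
qed

lemma NE_welfare_le_floor: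
  assumes "opt_ratio * Bo < Nm * Bn"
  shows "welfare X Y \<le> welfare Bo Bn"
  using floor_undervalued[OF assms] NE_total Bn_le_Y sp1.X_pos Bo_pos Bn_pos
  by (intro welfare_le_floor) simp_all

lemma NE_welfare_eq_floor_iff:
  assumes "opt_ratio * Bo < Nm * Bn"
  shows "welfare X Y = welfare Bo Bn \<longleftrightarrow> Y = Bn"
proof
  assume eq: "welfare X Y = welfare Bo Bn"
  show "Y = Bn"
  proof (rule ccontr)
    assume "Y \<noteq> Bn"
    then have "(Y - Bn) * (mval_S Bn - mval_M Bo) < 0"
      using Bn_le_Y floor_undervalued[OF assms] by (simp add: mult_pos_neg)
    then show False
      using welfare_less_exchange[of X Y Bo Bn] eq NE_total sp1.X_pos sp1.Y_pos Bo_pos Bn_pos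
      by simp
  qed
qed (use NE_total in simp)

lemma NE_at_floor_iff:
  assumes "opt_ratio * Bo < Nm * Bn"
  shows "Y = Bn \<longleftrightarrow> shift_gain B1n B1o Bn Bo \<le> 0 \<and> shift_gain B2n B2o Bn Bo \<le> 0"
proof
  assume "Y = Bn"
  then have "x1 = B1n" "x2 = B2n" "m1 = B1o" "m2 = B2o"
    using feasible_strategies sp1.uses_all sp2.uses_all by simp_all
  then show "shift_gain B1n B1o Bn Bo \<le> 0 \<and> shift_gain B2n B2o Bn Bo \<le> 0"
    using sp1.shift_gain_nonpos sp2.shift_gain_nonpos B1o_pos B2o_pos by simp
next
  assume gains: "shift_gain B1n B1o Bn Bo \<le> 0 \<and> shift_gain B2n B2o Bn Bo \<le> 0"
  show "Y = Bn"
  proof (rule ccontr)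
    assume "Y \<noteq> Bn"
    then have "Bn < Y" "X < Bo" using Bn_le_Y NE_total by simp_all
    then have "opt_ratio * X < Nm * Y"
      using assms opt_ratio_pos Nm_pos
      by (meson less_trans mult_strict_left_mono)
    then have undervalued: "mval_S Y < mval_M X"
      using mval_S_less_mval_M_iff sp1.X_pos sp1.Y_pos by simp
    consider "B1n < x1" "B2n < x2" | "x2 = B2n" "B1n < x1" | "x1 = B1n" "B2n < x2"
      using feasible_strategies \<open>Bn < Y\<close> by fastforce
    then show False
    proof cases
      case 1
      then have "x1 * X < m1 * Y" "x2 * X < m2 * Y"
        using sp1.small_share_less_above_floor sp2.small_share_less_above_floor undervalued by simp_all
      then show False using shares_sum by simp
    next
      case 2
      then show False
        using sp1.floor_shift_gain_pos[of B2n B2o] sp2.uses_all gains Bn_pos by simp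
    next
      case 3
      then show False
        using sp2.floor_shift_gain_pos[of B1n B1o] sp1.uses_all gains Bn_pos by (simp add: add.commute)
    qed
  qed
qed

end

theorem theorem4:
  fixes B1o B2o B B1n B2n R0 lamS Nm Nf al a T RS0 RM0 SWNE SWw SWwo :: real
    and s1 s2 :: strat
  assumes B1o: "B1o > 0" and B2o: "B2o > 0" and B: "B > 0"
    and B1n: "B1n \<ge> 0" and B2n: "B2n \<ge> 0" and Bsum: "B1n + B2n = B"
    and R0: "R0 > 0" and lamS: "lamS > 1" and Nm: "Nm > 0" and Nf: "Nf > 0"
    and al: "0 < al" "al < 1"
    and NE: "is_NE_w R0 lamS Nm Nf al (B1o + B1n) (B2o + B2n) B1n B2n s1 s2"
    and a_def: "a = Nf * lamS powr (1 / al - 1)"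
    and T_def: "T = (B1o + B2o) * a / Nm"
    and RS0_def: "RS0 = lamS * (B1n + B2n) * R0 / Nf"
    and RM0_def: "RM0 = (B1o + B2o) * R0 / Nm"
    and SWNE_def: "SWNE = SW R0 lamS Nm Nf al s1 s2"
    and SWw_def: "SWw = SW_opt_w R0 lamS Nm Nf al (B1o + B1n) (B2o + B2n) B1n B2n"
    and SWwo_def: "SWwo = SW_opt_wo R0 lamS Nm Nf al (B1o + B1n) (B2o + B2n)"
  shows "(B > T \<longrightarrow>
            SWNE \<le> SWw \<and> SWw < SWwo \<and>
            (SWNE = SWw \<longleftrightarrow>
               (lamS * RS0 powr (- al) - RM0 powr (- al)
                  - al * lamS\<^sup>2 * B1n * R0 / Nf * RS0 powr (- al - 1)
                  + al * B1o * R0 / Nm * RM0 powr (- al - 1) \<le> 0) \<and>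
               (lamS * RS0 powr (- al) - RM0 powr (- al)
                  - al * lamS\<^sup>2 * B2n * R0 / Nf * RS0 powr (- al - 1)
                  + al * B2o * R0 / Nm * RM0 powr (- al - 1) \<le> 0)))
       \<and> (B \<le> T \<longrightarrow>
            SWNE \<le> SWw \<and> SWw = SWwo \<and>
            ((SWNE = SWw \<and> SWw = SWwo) \<longleftrightarrow>
               (B - B2o * a / Nm \<le> B1n \<and> B1n \<le> B1o * a / Nm \<and> B2n = B - B1n)))"
proof -
  obtain m1 x1 m2 x2 where s: "s1 = (m1, x1)" "s2 = (m2, x2)" by (cases s1, cases s2) simp
  interpret equilibrium R0 lamS Nm Nf al B1o B2o B1n B2n m1 x1 m2 x2
    using assms s by unfold_locales auto
  have a: "a = opt_ratio" unfolding a_def opt_ratio_def ..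
  have T: "T < B \<longleftrightarrow> opt_ratio * Bo < Nm * Bn"
    unfolding T_def a Bsum using Nm_pos by (simp add: pos_divide_less_eq mult.commute)
  have interval: "(B - B2o * a / Nm \<le> B1n \<and> B1n \<le> B1o * a / Nm \<and> B2n = B - B1n)
      \<longleftrightarrow> B1n * Nm \<le> B1o * opt_ratio \<and> B2n * Nm \<le> B2o * opt_ratio"
    unfolding a using Bsum Nm_pos by (auto simp: pos_le_divide_eq pos_divide_le_eq)
  have SW_values: "SWNE = welfare X Y" "SWwo = welfare (opt_M (Bo + Bn)) (opt_S (Bo + Bn))"
    unfolding SWNE_def SWwo_def s NE_SW_eq SW_opt_wo_eq by simp_all
  have floor_case: "SWNE \<le> SWw \<and> SWw < SWwo \<and>
      (SWNE = SWw \<longleftrightarrow> shift_gain B1n B1o Bn Bo \<le> 0 \<and> shift_gain B2n B2o Bn Bo \<le> 0)"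
    if "opt_ratio * Bo < Nm * Bn"
    unfolding SW_values SWw_def SW_opt_w_eq_floor[OF that]
    using NE_welfare_le_floor floor_less_opt NE_welfare_eq_floor_iff NE_at_floor_iff that by simp
  have opt_case: "SWNE \<le> SWw \<and> SWw = SWwo \<and>
      (SWNE = SWw \<longleftrightarrow> B1n * Nm \<le> B1o * opt_ratio \<and> B2n * Nm \<le> B2o * opt_ratio)"
    if "Nm * Bn \<le> opt_ratio * Bo"
    unfolding SW_values SWw_def SW_opt_w_eq_opt[OF that]
    using NE_welfare_le_opt NE_welfare_eq_opt_iff balanced_iff_floors_affordable by simp
  show ?thesis
    unfolding interval shift_gain_eq[OF Bo_pos Bn_pos RS0_def RM0_def]
    using floor_case opt_case T by (auto simp: not_less[symmetric])
qed

end
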